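(* Let $A$ be a Noetherian ring, $\mathcal{R}$ a standard graded ring with $\mathcal{R}_0=A$, and $X\in\operatorname{^*Mod}_f(\mathcal{R})$. Assume $\operatorname{Ass}_A X$ is finite and that there is $m$ such that $\operatorname{Ass}_A H^0_{\mathcal{R}_+}(X)_n=\operatorname{Ass}_A H^0_{\mathcal{R}_+}(X)_m$ for all $n\ge m$. Then there exists $n_0$ such that $\operatorname{Ass}_A X_n=\operatorname{Ass}_A X_{n_0}$ for all $n\ge n_0$.
   Context: A standard graded ring $\mathcal{R}=\bigoplus_{n\ge0}\mathcal{R}_n$ with $\mathcal{R}_0=A$ is a Noetherian $\mathbb{N}$-graded commutative ring generated as an $A$-algebra by finitely many elements of $\mathcal{R}_1$; $\mathcal{R}_+=\bigoplus_{n\ge1}\mathcal{R}_n$. $\operatorname{^*Mod}_f(\mathcal{R})$ is the full subcategory of graded $\mathcal{R}$-modules $X=\bigoplus_{n\in\mathbb{Z}}X_n$ with every $X_n$ a finitely generated $A$-module and $X_n=0$ for $n\ll0$. $H^0_{\mathcal{R}_+}(X)=\{x\in X:\mathcal{R}_+^k x=0\text{ for some }k\}$. $\operatorname{Ass}_A X$ denotes the associated primes of $X$ regarded as an $A$-module. *)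

theory Defs
  imports Main
begin

text \<open>The graded ring R is the whole type 'a; its grading is Rg :: nat => 'a set,
  with A = Rg 0. The graded module X is the whole type 'm with scalar action sm
  and grading Xg :: int => 'm set.\<close>

definition add_subgroup :: "'a::ab_group_add set \<Rightarrow> bool" where
  "add_subgroup S \<longleftrightarrow> 0 \<in> S \<and> (\<forall>x\<in>S. \<forall>y\<in>S. x + y \<in> S) \<and> (\<forall>x\<in>S. - x \<in> S)"

definition ring_ideal :: "'a::comm_ring_1 set \<Rightarrow> 'a set \<Rightarrow> bool" where
  "ring_ideal A I \<longleftrightarrow> I \<subseteq> A \<and> add_subgroup I \<and> (\<forall>a\<in>A. \<forall>x\<in>I. a * x \<in> I)"

definition fin_gen_ideal :: "'a::comm_ring_1 set \<Rightarrow> 'a set \<Rightarrow> bool" where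
  "fin_gen_ideal A I \<longleftrightarrow>
     (\<exists>F. finite F \<and> F \<subseteq> I \<and> I = {(\<Sum>g\<in>F. c g * g) | c. \<forall>g\<in>F. c g \<in> A})"

definition noetherian_subring :: "'a::comm_ring_1 set \<Rightarrow> bool" where
  "noetherian_subring A \<longleftrightarrow> (\<forall>I. ring_ideal A I \<longrightarrow> fin_gen_ideal A I)"

definition prime_ideal_in :: "'a::comm_ring_1 set \<Rightarrow> 'a set \<Rightarrow> bool" where
  "prime_ideal_in A P \<longleftrightarrow> ring_ideal A P \<and> P \<noteq> A \<and>
     (\<forall>a\<in>A. \<forall>b\<in>A. a * b \<in> P \<longrightarrow> a \<in> P \<or> b \<in> P)"

definition graded_ring :: "(nat \<Rightarrow> 'a::comm_ring_1 set) \<Rightarrow> bool" where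
  "graded_ring Rg \<longleftrightarrow>
     (\<forall>n. add_subgroup (Rg n)) \<and> 1 \<in> Rg 0 \<and>
     (\<forall>i j. \<forall>x\<in>Rg i. \<forall>y\<in>Rg j. x * y \<in> Rg (i + j)) \<and>
     (\<forall>r. \<exists>!f. (\<forall>n. f n \<in> Rg n) \<and> finite {n. f n \<noteq> 0} \<and> r = (\<Sum>n\<in>{n. f n \<noteq> 0}. f n))"

definition algebra_generated :: "'a::comm_ring_1 set \<Rightarrow> 'a set \<Rightarrow> 'a set" where
  "algebra_generated A G = \<Inter> {S. A \<union> G \<subseteq> S \<and> add_subgroup S \<and> 1 \<in> S \<and>
                                   (\<forall>x\<in>S. \<forall>y\<in>S. x * y \<in> S)}"

definition standard_graded :: "(nat \<Rightarrow> 'a::comm_ring_1 set) \<Rightarrow> bool" where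
  "standard_graded Rg \<longleftrightarrow> graded_ring Rg \<and> noetherian_subring (UNIV :: 'a set) \<and>
     (\<exists>G. finite G \<and> G \<subseteq> Rg 1 \<and> algebra_generated (Rg 0) G = UNIV)"

definition Rplus :: "(nat \<Rightarrow> 'a::comm_ring_1 set) \<Rightarrow> 'a set" where
  "Rplus Rg = {r. \<exists>f. (\<forall>n. f n \<in> Rg n) \<and> f 0 = 0 \<and> finite {n. f n \<noteq> 0} \<and>
                      r = (\<Sum>n\<in>{n. f n \<noteq> 0}. f n)}"

definition module_ax :: "('a::comm_ring_1 \<Rightarrow> 'm::ab_group_add \<Rightarrow> 'm) \<Rightarrow> bool" where
  "module_ax sm \<longleftrightarrow> (\<forall>a b x. sm (a + b) x = sm a x + sm b x) \<and>
     (\<forall>a x y. sm a (x + y) = sm a x + sm a y) \<and>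
     (\<forall>a b x. sm (a * b) x = sm a (sm b x)) \<and> (\<forall>x. sm 1 x = x)"

definition graded_module ::
  "(nat \<Rightarrow> 'a::comm_ring_1 set) \<Rightarrow> ('a \<Rightarrow> 'm::ab_group_add \<Rightarrow> 'm) \<Rightarrow> (int \<Rightarrow> 'm set) \<Rightarrow> bool" where
  "graded_module Rg sm Xg \<longleftrightarrow> module_ax sm \<and> (\<forall>n. add_subgroup (Xg n)) \<and>
     (\<forall>i n. \<forall>r\<in>Rg i. \<forall>x\<in>Xg n. sm r x \<in> Xg (int i + n)) \<and>
     (\<forall>x. \<exists>!f. (\<forall>n. f n \<in> Xg n) \<and> finite {n. f n \<noteq> 0} \<and> x = (\<Sum>n\<in>{n. f n \<noteq> 0}. f n))"

definition fin_gen_module :: "'a::comm_ring_1 set \<Rightarrow> ('a \<Rightarrow> 'm::ab_group_add \<Rightarrow> 'm) \<Rightarrow> 'm set \<Rightarrow> bool" where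
  "fin_gen_module A sm M \<longleftrightarrow>
     (\<exists>F. finite F \<and> F \<subseteq> M \<and> M = {(\<Sum>g\<in>F. sm (c g) g) | c. \<forall>g\<in>F. c g \<in> A})"

definition starModf ::
  "(nat \<Rightarrow> 'a::comm_ring_1 set) \<Rightarrow> ('a \<Rightarrow> 'm::ab_group_add \<Rightarrow> 'm) \<Rightarrow> (int \<Rightarrow> 'm set) \<Rightarrow> bool" where
  "starModf Rg sm Xg \<longleftrightarrow> graded_module Rg sm Xg \<and> (\<forall>n. fin_gen_module (Rg 0) sm (Xg n)) \<and>
     (\<exists>n1. \<forall>n<n1. Xg n = {0})"

definition ann :: "'a::comm_ring_1 set \<Rightarrow> ('a \<Rightarrow> 'm::ab_group_add \<Rightarrow> 'm) \<Rightarrow> 'm \<Rightarrow> 'a set" where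
  "ann A sm x = {a\<in>A. sm a x = 0}"

definition Ass :: "'a::comm_ring_1 set \<Rightarrow> ('a \<Rightarrow> 'm::ab_group_add \<Rightarrow> 'm) \<Rightarrow> 'm set \<Rightarrow> 'a set set" where
  "Ass A sm M = {P. prime_ideal_in A P \<and> (\<exists>x\<in>M. P = ann A sm x)}"

text \<open>H^0_{R_+}(X) = {x. R_+^k x = 0 for some k}; R_+^k is generated by k-fold products.\<close>
definition H0 :: "(nat \<Rightarrow> 'a::comm_ring_1 set) \<Rightarrow> ('a \<Rightarrow> 'm::ab_group_add \<Rightarrow> 'm) \<Rightarrow> 'm set" where
  "H0 Rg sm = {x. \<exists>k. \<forall>rs. length rs = k \<and> set rs \<subseteq> Rplus Rg \<longrightarrow> sm (prod_list rs) x = 0}"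

end

theory Submission
  imports Defs
begin

text \<open>
  Let \<open>T\<close> be the eventual value of \<open>Ass\<^sub>A H\<^sup>0(X)\<^sub>n\<close>. If \<open>P = ann x\<close> with \<open>x \<in> X\<^sub>n\<close> is associated to
  \<open>X\<^sub>n\<close> but not to \<open>H\<^sup>0(X)\<^sub>n\<close>, then \<open>P\<close> is associated to \<open>X\<^sub>n\<^sub>+\<^sub>1\<close>: otherwise, for every generator
  \<open>g \<in> R\<^sub>1\<close>, the annihilator of \<open>g x\<close> strictly contains \<open>P\<close>, so some \<open>c\<^sub>g \<notin> P\<close> kills \<open>g x\<close>;
  then \<open>z = (\<Prod> c\<^sub>g) x\<close> still has annihilator \<open>P\<close> because \<open>P\<close> is prime, and is killed by all
  generators, hence by \<open>R\<^sub>+\<close>, so \<open>P\<close> would be associated to \<open>H\<^sup>0(X)\<^sub>n\<close>. Hence the sets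
  \<open>Ass\<^sub>A X\<^sub>n - T\<close> eventually increase with \<open>n\<close>; lying in the finite set \<open>Ass\<^sub>A X\<close>, they stabilise.
\<close>

lemma smult_add_left: "module_ax sm \<Longrightarrow> sm (a + b) x = sm a x + sm b x"
  by (simp add: module_ax_def)

lemma smult_add_right: "module_ax sm \<Longrightarrow> sm a (x + y) = sm a x + sm a y"
  by (simp add: module_ax_def)

lemma smult_zero_left: "module_ax sm \<Longrightarrow> sm 0 x = 0"
  using smult_add_left[of sm 0 0 x] by simp

lemma smult_zero_right: "module_ax sm \<Longrightarrow> sm a 0 = 0"
  using smult_add_right[of sm a 0 0] by simp

lemma smult_smult: "module_ax sm \<Longrightarrow> sm (a * b) x = sm a (sm b x)"
  by (simp add: module_ax_def)

lemma smult_minus_left: "module_ax sm \<Longrightarrow> sm (- a) x = - sm a x"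
  using smult_add_left[of sm a "- a" x] by (simp add: smult_zero_left add_eq_0_iff)

lemma smult_commute: "module_ax sm \<Longrightarrow> sm a (sm b x) = sm b (sm a x)"
  by (metis mult.commute smult_smult)

lemma smult_sum_left: "module_ax sm \<Longrightarrow> sm (\<Sum>n\<in>F. f n) x = (\<Sum>n\<in>F. sm (f n) x)"
  by (induction F rule: infinite_finite_induct) (auto simp: smult_zero_left smult_add_left)

lemma Ass_mono: "M \<subseteq> N \<Longrightarrow> Ass A sm M \<subseteq> Ass A sm N"
  unfolding Ass_def by blast

lemma algebra_generated_least:
  assumes "A \<union> G \<subseteq> S" "add_subgroup S" "1 \<in> S" "\<forall>x\<in>S. \<forall>y\<in>S. x * y \<in> S"
  shows "algebra_generated A G \<subseteq> S"
  unfolding algebra_generated_def using assms by blast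

lemma algebra_generated_mult_closed:
  assumes S: "add_subgroup S" and AG: "\<And>a s. a \<in> A \<union> G \<Longrightarrow> s \<in> S \<Longrightarrow> a * s \<in> S"
    and r: "r \<in> algebra_generated A G" and s: "s \<in> S"
  shows "r * s \<in> S"
proof -
  let ?M = "{r. \<forall>s\<in>S. r * s \<in> S}"
  have "add_subgroup ?M"
    using S unfolding add_subgroup_def by (simp add: distrib_right)
  then have "algebra_generated A G \<subseteq> ?M"
    by (intro algebra_generated_least) (auto simp: AG mult.assoc)
  then show ?thesis using r s by blast
qed

lemma graded_ring_zero: "graded_ring Rg \<Longrightarrow> 0 \<in> Rg n"
  by (simp add: graded_ring_def add_subgroup_def)

lemma graded_ring_one: "graded_ring Rg \<Longrightarrow> 1 \<in> Rg 0"
  by (simp add: graded_ring_def)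

lemma graded_ring_mult: "graded_ring Rg \<Longrightarrow> x \<in> Rg i \<Longrightarrow> y \<in> Rg j \<Longrightarrow> x * y \<in> Rg (i + j)"
  by (simp add: graded_ring_def)

definition homogeneous_part :: "(nat \<Rightarrow> 'a::comm_ring_1 set) \<Rightarrow> 'a \<Rightarrow> nat \<Rightarrow> 'a" where
  "homogeneous_part Rg r =
     (THE f. (\<forall>n. f n \<in> Rg n) \<and> finite {n. f n \<noteq> 0} \<and> r = (\<Sum>n\<in>{n. f n \<noteq> 0}. f n))"

lemma homogeneous_part_unique:
  assumes "graded_ring Rg" "\<forall>n. f n \<in> Rg n" "finite {n. f n \<noteq> 0}" "r = (\<Sum>n\<in>{n. f n \<noteq> 0}. f n)"
  shows "homogeneous_part Rg r = f"
  unfolding homogeneous_part_def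
  by (rule the1_equality) (use assms in \<open>auto simp: graded_ring_def\<close>)

lemma homogeneous_part_decomposition:
  assumes "graded_ring Rg"
  shows "homogeneous_part Rg r n \<in> Rg n" and "finite {n. homogeneous_part Rg r n \<noteq> 0}"
    and "r = (\<Sum>n\<in>{n. homogeneous_part Rg r n \<noteq> 0}. homogeneous_part Rg r n)"
proof -
  have "\<exists>!f. (\<forall>n. f n \<in> Rg n) \<and> finite {n. f n \<noteq> 0} \<and> r = (\<Sum>n\<in>{n. f n \<noteq> 0}. f n)"
    using assms by (simp add: graded_ring_def)
  from theI'[OF this] show "homogeneous_part Rg r n \<in> Rg n" "finite {n. homogeneous_part Rg r n \<noteq> 0}"
    "r = (\<Sum>n\<in>{n. homogeneous_part Rg r n \<noteq> 0}. homogeneous_part Rg r n)"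
    unfolding homogeneous_part_def by blast+
qed

lemma homogeneous_part_sum:
  assumes "graded_ring Rg" "\<forall>n. f n \<in> Rg n" "finite F" "{n. f n \<noteq> 0} \<subseteq> F"
  shows "homogeneous_part Rg (\<Sum>n\<in>F. f n) = f"
proof -
  have "(\<Sum>n\<in>F. f n) = (\<Sum>n\<in>{n. f n \<noteq> 0}. f n)"
    by (rule sum.mono_neutral_right) (use assms in auto)
  then show ?thesis
    using assms by (intro homogeneous_part_unique) (auto intro: finite_subset)
qed

lemma sum_homogeneous_part:
  assumes "graded_ring Rg" "finite F" "{n. homogeneous_part Rg r n \<noteq> 0} \<subseteq> F"
  shows "r = (\<Sum>n\<in>F. homogeneous_part Rg r n)"
proof -
  have "(\<Sum>n\<in>F. homogeneous_part Rg r n)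
      = (\<Sum>n\<in>{n. homogeneous_part Rg r n \<noteq> 0}. homogeneous_part Rg r n)"
    by (rule sum.mono_neutral_right) (use assms in auto)
  then show ?thesis using homogeneous_part_decomposition(3)[OF assms(1), of r] by simp
qed

lemma homogeneous_part_homogeneous:
  assumes "graded_ring Rg" "a \<in> Rg k"
  shows "homogeneous_part Rg a = (\<lambda>n. if n = k then a else 0)"
proof -
  have "homogeneous_part Rg (\<Sum>n\<in>{k}. if n = k then a else 0) = (\<lambda>n. if n = k then a else 0)"
    by (intro homogeneous_part_sum) (use assms graded_ring_zero in auto)
  then show ?thesis by simp
qed

lemma homogeneous_part_add:
  assumes gr: "graded_ring Rg"
  shows "homogeneous_part Rg (r + s) n = homogeneous_part Rg r n + homogeneous_part Rg s n"
proof -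
  let ?F = "{n. homogeneous_part Rg r n \<noteq> 0} \<union> {n. homogeneous_part Rg s n \<noteq> 0}"
  have F: "finite ?F" using homogeneous_part_decomposition(2)[OF gr] by blast
  have sum_eq: "r + s = (\<Sum>n\<in>?F. homogeneous_part Rg r n + homogeneous_part Rg s n)"
    using sum_homogeneous_part[OF gr F, of r] sum_homogeneous_part[OF gr F, of s]
    by (simp add: sum.distrib)
  have mem: "\<forall>n. homogeneous_part Rg r n + homogeneous_part Rg s n \<in> Rg n"
    using gr homogeneous_part_decomposition(1)[OF gr] by (simp add: graded_ring_def add_subgroup_def)
  have "homogeneous_part Rg (r + s) = (\<lambda>n. homogeneous_part Rg r n + homogeneous_part Rg s n)"
    unfolding sum_eq by (rule homogeneous_part_sum[OF gr mem F]) auto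
  then show ?thesis by simp
qed

lemma homogeneous_part_uminus:
  assumes gr: "graded_ring Rg"
  shows "homogeneous_part Rg (- r) n = - homogeneous_part Rg r n"
proof -
  let ?F = "{n. homogeneous_part Rg r n \<noteq> 0}"
  have F: "finite ?F" using homogeneous_part_decomposition(2)[OF gr] .
  have sum_eq: "- r = (\<Sum>n\<in>?F. - homogeneous_part Rg r n)"
    using sum_homogeneous_part[OF gr F, of r] by (simp add: sum_negf)
  have mem: "\<forall>n. - homogeneous_part Rg r n \<in> Rg n"
    using gr homogeneous_part_decomposition(1)[OF gr] by (simp add: graded_ring_def add_subgroup_def)
  have "homogeneous_part Rg (- r) = (\<lambda>n. - homogeneous_part Rg r n)"
    unfolding sum_eq by (rule homogeneous_part_sum[OF gr mem F]) auto
  then show ?thesis by simp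
qed

lemma homogeneous_part_mult:
  assumes gr: "graded_ring Rg" and a: "a \<in> Rg k"
  shows "homogeneous_part Rg (a * r) n = (if k \<le> n then a * homogeneous_part Rg r (n - k) else 0)"
proof -
  let ?F = "{n. homogeneous_part Rg r n \<noteq> 0}"
  let ?f = "\<lambda>n. if k \<le> n then a * homogeneous_part Rg r (n - k) else 0"
  have F: "finite ?F" using homogeneous_part_decomposition(2)[OF gr] .
  have r: "r = (\<Sum>n\<in>?F. homogeneous_part Rg r n)"
    by (rule sum_homogeneous_part[OF gr F]) simp
  have "a * r = (\<Sum>n\<in>?F. ?f (n + k))"
    by (subst r) (simp add: sum_distrib_left)
  also have "\<dots> = (\<Sum>n\<in>(\<lambda>n. n + k) ` ?F. ?f n)"
    by (simp add: sum.reindex)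
  finally have ar: "a * r = (\<Sum>n\<in>(\<lambda>n. n + k) ` ?F. ?f n)" .
  have mem: "\<forall>n. ?f n \<in> Rg n"
  proof
    fix n
    have "a * homogeneous_part Rg r (n - k) \<in> Rg (k + (n - k))"
      using graded_ring_mult[OF gr a homogeneous_part_decomposition(1)[OF gr]] .
    moreover have "(0::'a) \<in> Rg n"
      using graded_ring_zero[OF gr] .
    ultimately show "?f n \<in> Rg n" by auto
  qed
  have supp: "{n. ?f n \<noteq> 0} \<subseteq> (\<lambda>n. n + k) ` ?F"
  proof
    fix n assume "n \<in> {n. ?f n \<noteq> 0}"
    then have "k \<le> n" "n - k \<in> ?F" by (simp_all split: if_splits) (metis mult_zero_right)
    then show "n \<in> (\<lambda>n. n + k) ` ?F" by (intro image_eqI[of _ _ "n - k"]) simp_all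
  qed
  have "homogeneous_part Rg (a * r) = ?f"
    unfolding ar by (rule homogeneous_part_sum[OF gr mem finite_imageI[OF F] supp])
  then show ?thesis by simp
qed

lemma homogeneous_part_positive_annihilates:
  assumes gr: "graded_ring Rg" and m: "module_ax sm" and G1: "G \<subseteq> Rg 1"
    and gen: "algebra_generated (Rg 0) G = UNIV" and Gx: "\<forall>g\<in>G. sm g x = 0" and d: "1 \<le> d"
  shows "sm (homogeneous_part Rg r d) x = 0"
proof -
  define S where "S = {s. \<forall>d\<ge>1. sm (homogeneous_part Rg s d) x = 0}"
  have S_subgroup: "add_subgroup S"
    unfolding add_subgroup_def
  proof (intro conjI ballI)
    show "0 \<in> S"
      using homogeneous_part_homogeneous[OF gr graded_ring_zero[OF gr, of 0]]
      by (simp add: S_def smult_zero_left[OF m])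
  next
    fix a b assume "a \<in> S" "b \<in> S"
    then show "a + b \<in> S"
      by (simp add: S_def homogeneous_part_add[OF gr] smult_add_left[OF m])
  next
    fix a assume "a \<in> S"
    then show "- a \<in> S"
      by (simp add: S_def homogeneous_part_uminus[OF gr] smult_minus_left[OF m])
  qed
  have S_mult: "a * s \<in> S" if a: "a \<in> Rg 0 \<union> G" and s: "s \<in> S" for a s
  proof -
    obtain k where k: "a \<in> Rg k" "k = 0 \<or> (k = 1 \<and> a \<in> G)"
      using a G1 by blast
    have "sm (homogeneous_part Rg (a * s) d) x = 0" if "1 \<le> d" for d
    proof (cases "k \<le> d")
      case True
      then have "sm (homogeneous_part Rg (a * s) d) x = sm a (sm (homogeneous_part Rg s (d - k)) x)"
        by (simp add: homogeneous_part_mult[OF gr k(1)] smult_smult[OF m])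
      also have "\<dots> = 0"
      proof (cases "1 \<le> d - k")
        case True
        then show ?thesis using s by (simp add: S_def smult_zero_right[OF m])
      next
        case False
        \<comment> \<open>then \<open>a\<close> is a generator and kills \<open>x\<close> before the degree-0 part acts\<close>
        with k \<open>1 \<le> d\<close> have "sm a x = 0" using Gx by auto
        then show ?thesis
          by (simp add: smult_commute[OF m, of a] smult_zero_right[OF m])
      qed
      finally show ?thesis .
    qed (simp add: homogeneous_part_mult[OF gr k(1)] smult_zero_left[OF m])
    then show ?thesis by (simp add: S_def)
  qed
  have S_one: "1 \<in> S"
    by (simp add: S_def homogeneous_part_homogeneous[OF gr graded_ring_one[OF gr]] smult_zero_left[OF m])
  have "r * 1 \<in> S"
    using algebra_generated_mult_closed[of S "Rg 0" G, OF S_subgroup S_mult] gen S_one by blast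
  then show ?thesis using d by (simp add: S_def)
qed

lemma Rplus_annihilates:
  assumes gr: "graded_ring Rg" and m: "module_ax sm" and G1: "G \<subseteq> Rg 1"
    and gen: "algebra_generated (Rg 0) G = UNIV" and Gx: "\<forall>g\<in>G. sm g x = 0"
    and r: "r \<in> Rplus Rg"
  shows "sm r x = 0"
proof -
  from r obtain f where f: "\<forall>n. f n \<in> Rg n" "f 0 = 0" "finite {n. f n \<noteq> 0}"
    and r_sum: "r = (\<Sum>n\<in>{n. f n \<noteq> 0}. f n)"
    unfolding Rplus_def by blast
  have "homogeneous_part Rg r = f"
    using homogeneous_part_unique[OF gr f(1,3) r_sum] .
  then have "sm (f n) x = 0" if "f n \<noteq> 0" for n
    using homogeneous_part_positive_annihilates[OF gr m G1 gen Gx, of n r] that f(2)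
    by (cases n) auto
  then show ?thesis
    by (simp add: r_sum smult_sum_left[OF m])
qed

lemma H0_if_generators_annihilate:
  assumes "graded_ring Rg" "module_ax sm" "G \<subseteq> Rg 1"
    and "algebra_generated (Rg 0) G = UNIV" and "\<forall>g\<in>G. sm g x = 0"
  shows "x \<in> H0 Rg sm"
  unfolding H0_def
proof (intro CollectI exI[of _ 1] allI impI)
  fix rs :: "'a list" assume "length rs = 1 \<and> set rs \<subseteq> Rplus Rg"
  then obtain r where "rs = [r]" "r \<in> Rplus Rg"
    by (cases rs) auto
  then show "sm (prod_list rs) x = 0"
    using Rplus_annihilates[OF assms] by simp
qed

lemma one_notin_prime_ideal:
  assumes "prime_ideal_in A P"
  shows "1 \<notin> P"
proof
  assume "1 \<in> P"
  then have "A \<subseteq> P"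
    using assms unfolding prime_ideal_in_def ring_ideal_def by (metis mult.right_neutral subsetI)
  then show False
    using assms unfolding prime_ideal_in_def ring_ideal_def by blast
qed

lemma prime_ideal_inD:
  "prime_ideal_in A P \<Longrightarrow> a \<in> A \<Longrightarrow> b \<in> A \<Longrightarrow> a * b \<in> P \<Longrightarrow> a \<in> P \<or> b \<in> P"
  unfolding prime_ideal_in_def by blast

lemma prod_notin_prime_ideal:
  assumes P: "prime_ideal_in A P" and A: "1 \<in> A" "\<forall>a\<in>A. \<forall>b\<in>A. a * b \<in> A"
    and f: "\<forall>g\<in>F. f g \<in> A - P"
  shows "prod f F \<in> A - P"
  using f
proof (induction F rule: infinite_finite_induct)
  case (insert g F)
  then have "f g \<in> A - P" "prod f F \<in> A - P" by simp_all
  then show ?case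
    using insert.hyps A prime_ideal_inD[OF P, of "f g" "prod f F"] by auto
qed (use A one_notin_prime_ideal[OF P] in auto)

lemma ann_smult_notin_prime:
  assumes m: "module_ax sm" and P: "prime_ideal_in A (ann A sm x)"
    and A: "\<forall>a\<in>A. \<forall>b\<in>A. a * b \<in> A" and a: "a \<in> A" "a \<notin> ann A sm x"
  shows "ann A sm (sm a x) = ann A sm x"
proof (intro set_eqI iffI)
  fix b assume "b \<in> ann A sm (sm a x)"
  then have "b \<in> A" "b * a \<in> ann A sm x"
    using A a by (auto simp: ann_def smult_smult[OF m])
  then show "b \<in> ann A sm x"
    using prime_ideal_inD[OF P] a by blast
next
  fix b assume "b \<in> ann A sm x"
  then have "b \<in> A" "sm b x = 0"
    by (simp_all add: ann_def)
  then show "b \<in> ann A sm (sm a x)"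
    by (simp add: ann_def smult_commute[OF m, of b] smult_zero_right[OF m])
qed

lemma Ass_next_degree:
  assumes gr: "graded_ring Rg" and m: "module_ax sm"
    and G: "finite G" "G \<subseteq> Rg 1" "algebra_generated (Rg 0) G = UNIV"
    and grad: "\<forall>i n. \<forall>r\<in>Rg i. \<forall>x\<in>Xg n. sm r x \<in> Xg (int i + n)"
    and P: "P \<in> Ass (Rg 0) sm (Xg n)" "P \<notin> Ass (Rg 0) sm (H0 Rg sm \<inter> Xg n)"
  shows "P \<in> Ass (Rg 0) sm (Xg (n + 1))"
proof (rule ccontr)
  let ?A = "Rg 0"
  assume not_next: "P \<notin> Ass ?A sm (Xg (n + 1))"
  from P(1) obtain x where x: "x \<in> Xg n" and Px: "P = ann ?A sm x" and prime: "prime_ideal_in ?A P"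
    unfolding Ass_def by blast
  have A_mult: "\<forall>a\<in>?A. \<forall>b\<in>?A. a * b \<in> ?A"
    using graded_ring_mult[OF gr, of _ 0 _ 0] by simp
  have "\<exists>a\<in>?A - P. sm a (sm g x) = 0" if g: "g \<in> G" for g
  proof -
    have "sm g x \<in> Xg (int 1 + n)"
      using grad g G(2) x by blast
    then have gx: "sm g x \<in> Xg (n + 1)"
      by (simp add: add.commute)
    have "P \<subseteq> ann ?A sm (sm g x)"
      by (auto simp: Px ann_def smult_commute[OF m, of _ g] smult_zero_right[OF m])
    moreover have "ann ?A sm (sm g x) \<noteq> P"
      using not_next gx prime unfolding Ass_def by blast
    ultimately show ?thesis unfolding ann_def by blast
  qed
  then obtain c where c: "\<And>g. g \<in> G \<Longrightarrow> c g \<in> ?A - P \<and> sm (c g) (sm g x) = 0"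
    by metis
  have c_prod: "prod c G \<in> ?A - P"
    by (rule prod_notin_prime_ideal[OF prime graded_ring_one[OF gr] A_mult]) (use c in blast)
  define z where "z = sm (prod c G) x"
  have "z \<in> Xg (int 0 + n)"
    using grad c_prod x unfolding z_def by blast
  then have "z \<in> Xg n"
    by simp
  moreover have "z \<in> H0 Rg sm"
  proof (rule H0_if_generators_annihilate[OF gr m G(2,3)], intro ballI)
    fix g assume g: "g \<in> G"
    have "sm g z = sm (g * prod c G) x"
      by (simp add: z_def smult_smult[OF m])
    also have "g * prod c G = prod c (G - {g}) * (c g * g)"
      using prod.remove[OF G(1) g, of c] by (simp add: ac_simps)
    also have "sm \<dots> x = sm (prod c (G - {g})) (sm (c g) (sm g x))"
      by (simp add: smult_smult[OF m])
    also have "\<dots> = 0"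
      using c[OF g] by (simp add: smult_zero_right[OF m])
    finally show "sm g z = 0" .
  qed
  moreover have "ann ?A sm z = P"
    unfolding z_def Px by (rule ann_smult_notin_prime[OF m _ A_mult]) (use prime c_prod Px in auto)
  ultimately have "P \<in> Ass ?A sm (H0 Rg sm \<inter> Xg n)"
    using prime unfolding Ass_def by blast
  then show False using P(2) by blast
qed

lemma eventually_constant_if_mono_bounded:
  fixes D :: "int \<Rightarrow> 'b set"
  assumes U: "finite U" and bounded: "\<And>n. m \<le> n \<Longrightarrow> D n \<subseteq> U"
    and mono: "\<And>n. m \<le> n \<Longrightarrow> D n \<subseteq> D (n + 1)"
  shows "\<exists>n0\<ge>m. \<forall>n\<ge>n0. D n = D n0"
proof -
  have D_mono: "D a \<subseteq> D b" if "m \<le> a" "a \<le> b" for a b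
    using that(2)
  proof (induction b rule: int_ge_induct)
    case (step i)
    then show ?case using mono[of i] that(1) by auto
  qed simp
  have fin: "finite (D n)" if "m \<le> n" for n
    using finite_subset[OF bounded[OF that] U] .
  let ?C = "(\<lambda>n. card (D n)) ` {m..}"
  have C: "finite ?C"
    by (rule finite_subset[of _ "{..card U}"]) (auto intro: card_mono[OF U bounded])
  obtain n0 where n0: "m \<le> n0" "card (D n0) = Max ?C"
    using Max_in[OF C] by auto
  have "D n = D n0" if "n0 \<le> n" for n
  proof (rule sym, rule card_subset_eq)
    show "finite (D n)" "D n0 \<subseteq> D n"
      using that n0(1) fin D_mono by simp_all
    have "card (D n) \<le> Max ?C"
      using that n0(1) by (intro Max_ge[OF C]) auto
    then show "card (D n0) = card (D n)"
      using n0(2) card_mono[OF \<open>finite (D n)\<close> \<open>D n0 \<subseteq> D n\<close>] by simp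
  qed
  then show ?thesis using n0(1) by blast
qed

theorem theorem4p5:
  fixes Rg :: "nat \<Rightarrow> 'a::comm_ring_1 set"
    and sm :: "'a \<Rightarrow> 'm::ab_group_add \<Rightarrow> 'm"
    and Xg :: "int \<Rightarrow> 'm set"
  assumes "noetherian_subring (Rg 0)"
    and "standard_graded Rg"
    and "starModf Rg sm Xg"
    and "finite (Ass (Rg 0) sm UNIV)"
    and "\<exists>m. \<forall>n\<ge>m. Ass (Rg 0) sm (H0 Rg sm \<inter> Xg n) = Ass (Rg 0) sm (H0 Rg sm \<inter> Xg m)"
  shows "\<exists>n0. \<forall>n\<ge>n0. Ass (Rg 0) sm (Xg n) = Ass (Rg 0) sm (Xg n0)"
proof -
  obtain G where gr: "graded_ring Rg" and G: "finite G" "G \<subseteq> Rg 1" "algebra_generated (Rg 0) G = UNIV"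
    using assms(2) unfolding standard_graded_def by blast
  have m: "module_ax sm" and grad: "\<forall>i n. \<forall>r\<in>Rg i. \<forall>x\<in>Xg n. sm r x \<in> Xg (int i + n)"
    using assms(3) unfolding starModf_def graded_module_def by blast+
  obtain m0 where H0_stable:
    "\<And>n. m0 \<le> n \<Longrightarrow> Ass (Rg 0) sm (H0 Rg sm \<inter> Xg n) = Ass (Rg 0) sm (H0 Rg sm \<inter> Xg m0)"
    using assms(5) by blast
  define T where "T = Ass (Rg 0) sm (H0 Rg sm \<inter> Xg m0)"
  define D where "D n = Ass (Rg 0) sm (Xg n) - T" for n
  have Ass_split: "Ass (Rg 0) sm (Xg n) = T \<union> D n" if "m0 \<le> n" for n
    using H0_stable[OF that] Ass_mono[of "H0 Rg sm \<inter> Xg n" "Xg n"] by (auto simp: T_def D_def)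
  have "\<exists>n0\<ge>m0. \<forall>n\<ge>n0. D n = D n0"
  proof (rule eventually_constant_if_mono_bounded[OF assms(4)])
    show "D n \<subseteq> Ass (Rg 0) sm UNIV" for n
      using Ass_mono[of "Xg n" UNIV] by (auto simp: D_def)
    show "D n \<subseteq> D (n + 1)" if "m0 \<le> n" for n
      using Ass_next_degree[OF gr m G grad] H0_stable[OF that] by (auto simp: D_def T_def)
  qed
  then obtain n0 where "m0 \<le> n0" "\<forall>n\<ge>n0. D n = D n0"
    by blast
  then show ?thesis
    using Ass_split by (metis order_trans)
qed

end
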